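(* Let $\mathcal M=(\{1,\dots,n\}\uplus\{\mathbf{good}\},\mathcal D,\mathbf Q)$ be a CTMDP with absorbing state $\mathbf{good}$, $B>0$, and let $\pi$ be a policy such that, writing $\mathbf d_t:=\pi_{B-t}$ and letting $W^\pi_t$ solve $\frac{d}{dt}W^\pi_t=\mathbf Q^{\mathbf d_t}W^\pi_t$ with $W^\pi_0=\mathbf u(\mathbf{good})$, the decision vector $\mathbf d_t$ maximizes $\mathbf Q^{\mathbf d}W^\pi_t$ (elementwise, over $\mathbf d\in\mathcal D$) for almost all $t\in[0,B]$. Take $t^*$ such that $\mathcal F_{n+2}(W^\pi_{t^*})$ differs from $\lim_{t\uparrow t^*}\mathcal F_{n+2}(W^\pi_t)$, and suppose $\mathcal F_{n+2}(W^\pi_{t^*})=\{\mathbf d^1,\dots,\mathbf d^p\}$ with $p>1$. For $i\in\{1,\dots,p\}$ let $$\Delta_i:=\sup\{\delta>0: \mathbf d^i\in\mathcal F_{n+2}(W^\pi_t)\text{ for all }t\in[t^*,t^*+\delta)\}.$$ Then $\Delta_1=\Delta_2=\dots=\Delta_p$. Moreover, suppose $t^*\le\delta_1<\delta_2<t^*+\Delta_1$ and $\pi_{B-t}=\mathbf d$ for all $t\in[\delta_1,\delta_2)$, for some $\mathbf d\in\mathcal F_{n+1}(W^\pi_{t^*})$. If $\pi'$ is a policy with $\pi'_{B-t}=\pi_{B-t}$ for $t\in[0,\delta_1)$ and $\pi'_{B-t}=\mathbf d'$ for all $t\in[\delta_1,\delta_2)$, for some $\mathbf d'\in\mathcal F_{n+1}(W^\pi_{t^*})\setminus\{\mathbf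 d\}$, then $\pi'$ also has the property that $\pi'_{B-t}$ maximizes $\mathbf Q^{\mathbf d}W^{\pi'}_t$ for almost all $t\in[0,\delta_2)$ (where $W^{\pi'}$ is defined from $\pi'$ in the same way as $W^\pi$ from $\pi$).
   Context: CTMDP: $\mathcal M=(S,\mathcal D,\mathbf Q)$ with finite state set $S$, decision vectors $\mathcal D=\prod_{s\in S}\mathcal D_s$ (finite action sets), and for each $\mathbf d\in\mathcal D$ a generator matrix $\mathbf Q^{\mathbf d}$ (off-diagonal entries $\mathbf Q^{\mathbf d}(s,s')\ge0$ depending only on $\mathbf d(s)$; diagonal entries make row sums zero). A state is absorbing if its row is zero for every $\mathbf d$. A policy is a measurable map $\pi:[0,B]\to\mathcal D$. $\mathbf u(s)$ is the vector with $1$ in coordinate $s$ and $0$ elsewhere. Vector comparisons and maximizations are elementwise. For a vector $W$ define recursively $\mathcal F_1(W)=\{\mathbf d\in\mathcal D:\mathbf d\text{ maximizes }\mathbf Q^{\mathbf d}W\}$ and, for $j\ge2$, $\mathcal F_j(W)=\{\mathbf d\in\mathcal F_{j-1}(W):\mathbf d\text{ maximizes }[\mathbf Q^{\mathbf d}]^jW\text{ over }\mathcal F_{j-1}(W)\}$. *)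

theory Defs
  imports "HOL-Analysis.Analysis"
begin

text \<open>CTMDP with finite state type 's and actions of type 'a.
  Q s a s' is the transition rate from s to s' under action a chosen in s;
  so the generator of a decision vector d has entries Q s (d s) s'.\<close>

definition ctmdp :: "('s::finite \<Rightarrow> 'a set) \<Rightarrow> ('s \<Rightarrow> 'a \<Rightarrow> 's \<Rightarrow> real) \<Rightarrow> bool" where
  "ctmdp Act Q \<longleftrightarrow>
     (\<forall>s. finite (Act s) \<and> Act s \<noteq> {}) \<and>
     (\<forall>s a s'. a \<in> Act s \<longrightarrow> s \<noteq> s' \<longrightarrow> 0 \<le> Q s a s') \<and>
     (\<forall>s a. a \<in> Act s \<longrightarrow> Q s a s = - (\<Sum>s'\<in>UNIV - {s}. Q s a s'))"

definition decisions :: "('s \<Rightarrow> 'a set) \<Rightarrow> ('s \<Rightarrow> 'a) set" where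
  "decisions Act = {d. \<forall>s. d s \<in> Act s}"

definition absorbing :: "('s \<Rightarrow> 'a set) \<Rightarrow> ('s \<Rightarrow> 'a \<Rightarrow> 's \<Rightarrow> real) \<Rightarrow> 's \<Rightarrow> bool" where
  "absorbing Act Q g \<longleftrightarrow> (\<forall>a\<in>Act g. \<forall>s'. Q g a s' = 0)"

definition Qmul :: "('s::finite \<Rightarrow> 'a \<Rightarrow> 's \<Rightarrow> real) \<Rightarrow> ('s \<Rightarrow> 'a) \<Rightarrow> ('s \<Rightarrow> real) \<Rightarrow> ('s \<Rightarrow> real)" where
  "Qmul Q d W = (\<lambda>s. \<Sum>s'\<in>UNIV. Q s (d s) s' * W s')"

text \<open>F_j(W); index 0 is an auxiliary base case (all decision vectors), so that
  Fset Act Q 1 W is the set of maximisers of Q^d W over D, and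
  Fset Act Q (Suc j) W the maximisers of (Q^d)^(Suc j) W over Fset Act Q j W.\<close>
fun Fset :: "('s::finite \<Rightarrow> 'a set) \<Rightarrow> ('s \<Rightarrow> 'a \<Rightarrow> 's \<Rightarrow> real) \<Rightarrow> nat \<Rightarrow> ('s \<Rightarrow> real) \<Rightarrow> ('s \<Rightarrow> 'a) set" where
  "Fset Act Q 0 W = decisions Act"
| "Fset Act Q (Suc j) W =
     {d \<in> Fset Act Q j W. \<forall>d'\<in>Fset Act Q j W. \<forall>s.
        (Qmul Q d' ^^ Suc j) W s \<le> (Qmul Q d ^^ Suc j) W s}"

text \<open>A policy: measurable map [0,B] -> D (D finite, discrete sigma-algebra).\<close>
definition policy :: "('s \<Rightarrow> 'a set) \<Rightarrow> real \<Rightarrow> (real \<Rightarrow> 's \<Rightarrow> 'a) \<Rightarrow> bool" where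
  "policy Act B \<pi> \<longleftrightarrow> (\<forall>t\<in>{0..B}. \<pi> t \<in> decisions Act) \<and>
     (\<forall>d. {t\<in>{0..B}. \<pi> t = d} \<in> sets borel)"

text \<open>W solves d/dt W_t = Q^{pi_{B-t}} W_t, W_0 = u(good) on [0,B]
  (Caratheodory sense, i.e. the integral equation, componentwise).\<close>
definition value_fn :: "('s::finite \<Rightarrow> 'a \<Rightarrow> 's \<Rightarrow> real) \<Rightarrow> 's \<Rightarrow> real \<Rightarrow> (real \<Rightarrow> 's \<Rightarrow> 'a)
     \<Rightarrow> (real \<Rightarrow> 's \<Rightarrow> real) \<Rightarrow> bool" where
  "value_fn Q g B \<pi> W \<longleftrightarrow>
     (\<forall>t\<in>{0..B}. \<forall>s. ((\<lambda>\<tau>. Qmul Q (\<pi> (B - \<tau>)) (W \<tau>) s) has_integral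
                         (W t s - (if s = g then 1 else 0))) {0..t})"

definition Delta :: "('s::finite \<Rightarrow> 'a set) \<Rightarrow> ('s \<Rightarrow> 'a \<Rightarrow> 's \<Rightarrow> real) \<Rightarrow> nat \<Rightarrow> real
     \<Rightarrow> (real \<Rightarrow> 's \<Rightarrow> real) \<Rightarrow> real \<Rightarrow> ('s \<Rightarrow> 'a) \<Rightarrow> ereal" where
  "Delta Act Q k B W tstar d =
     Sup (ereal ` {\<delta>. \<delta> > 0 \<and> (\<forall>t. tstar \<le> t \<and> t < tstar + \<delta> \<and> t \<le> B \<longrightarrow> d \<in> Fset Act Q k (W t))})"

end

theory Submission
  imports Defs
begin

text \<open>
  On a window [t*, t*+\<delta>) in which a decision vector d1 stays in F_{n+2}(W_t), Bellman optimality
  of \<pi> means that W solves W' = Q^{d1} W there.  If d2 \<in> F_{n+2}(W_{t*}) too, then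
  (Q^{d2})^j W_{t*} = (Q^{d1})^j W_{t*} for j \<le> |S| = n + 1, and a Krylov dimension argument
  extends this to all j: Q^{d2} and Q^{d1} agree on the Q^{d1}-Krylov space of W_{t*}.  This
  space is invariant under the flow of Q^{d1}.  Concretely, the defects
  (Q^{d2} - Q^{d1}) (Q^{d1})^j W_t satisfy a closed linear integral system (closed because the
  powers of a matrix obey a fixed linear recurrence) and vanish at t*, so they vanish on the
  window by Gronwall's inequality.  Hence d1 and d2 have the same powers at every W_t in the
  window, belong to the same sets F_k(W_t), and so have the same \<Delta>.

  For the second claim the same identity gives Q^{d'} W_t = Q^{d} W_t = Q^{d1} W_t on the
  window, so W also solves the equation of the switched policy \<pi>'; by uniqueness of solutions
  W' = W up to \<delta>2, and d' maximises Q^{d} W_t because d1 does.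
\<close>

lemma Fset_antimono: "j \<le> k \<Longrightarrow> Fset Act Q k W \<subseteq> Fset Act Q j W"
  by (induction k) (auto simp: le_Suc_eq)

lemma Fset_antimonoD: "d \<in> Fset Act Q k W \<Longrightarrow> j \<le> k \<Longrightarrow> d \<in> Fset Act Q j W"
  using Fset_antimono by blast

lemma Fset_decisions: "d \<in> Fset Act Q k W \<Longrightarrow> d \<in> decisions Act"
  using Fset_antimono[of 0 k] by auto

lemma Fset_funpow_eq:
  assumes "d \<in> Fset Act Q k W" "d' \<in> Fset Act Q k W" "j \<le> k"
  shows "(Qmul Q d ^^ j) W = (Qmul Q d' ^^ j) W"
  using assms
proof (induction k arbitrary: j)
  case (Suc k)
  show ?case
  proof (cases "j = Suc k")
    case True
    with Suc.prems show ?thesis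
      by (intro ext) (auto intro: order_antisym)
  qed (use Suc in auto)
qed simp

lemma Fset_iff_if_funpow_eq:
  assumes "d1 \<in> decisions Act" "d2 \<in> decisions Act"
    and "\<And>j. (Qmul Q d1 ^^ j) W = (Qmul Q d2 ^^ j) W"
  shows "d1 \<in> Fset Act Q k W \<longleftrightarrow> d2 \<in> Fset Act Q k W"
proof (induction k)
  case (Suc k)
  have "(Qmul Q d1 ^^ Suc k) W = (Qmul Q d2 ^^ Suc k) W" by (rule assms(3))
  with Suc show ?case by (simp only: Fset.simps mem_Collect_eq)
qed (simp add: assms)

section \<open>Krylov sequences\<close>

lemma funpow_eq_iff_agree_on_orbit:
  "(\<forall>j. (g ^^ j) x = (f ^^ j) x) \<longleftrightarrow> (\<forall>j. g ((f ^^ j) x) = f ((f ^^ j) x))"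
proof
  assume "\<forall>j. (g ^^ j) x = (f ^^ j) x"
  then show "\<forall>j. g ((f ^^ j) x) = f ((f ^^ j) x)"
    by (metis funpow.simps(2) o_apply)
next
  assume agree: "\<forall>j. g ((f ^^ j) x) = f ((f ^^ j) x)"
  show "\<forall>j. (g ^^ j) x = (f ^^ j) x"
  proof
    fix j show "(g ^^ j) x = (f ^^ j) x"
      by (induction j) (simp_all add: agree)
  qed
qed

lemma krylov_dependent:
  fixes f :: "'v::euclidean_space \<Rightarrow> 'v"
  shows "\<exists>k \<le> DIM('v). (f ^^ k) x \<in> span ((\<lambda>i. (f ^^ i) x) ` {..<k})"
proof (rule ccontr)
  assume indep: "\<not> ?thesis"
  have "dim ((\<lambda>i. (f ^^ i) x) ` {..<k}) = k" if "k \<le> Suc DIM('v)" for k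
    using that
  proof (induction k)
    case (Suc k)
    then have "(f ^^ k) x \<notin> span ((\<lambda>i. (f ^^ i) x) ` {..<k})" using indep by auto
    then show ?case using Suc by (simp add: lessThan_Suc dim_insert)
  qed simp
  then have "dim ((\<lambda>i. (f ^^ i) x) ` {..<Suc DIM('v)}) = Suc DIM('v)" by simp
  with dim_subset_UNIV show False by (metis not_less_eq_eq order_refl)
qed

lemma funpow_in_krylov_span:
  fixes f :: "'v::real_vector \<Rightarrow> 'v"
  assumes "linear f" and dep: "(f ^^ k) x \<in> span ((\<lambda>i. (f ^^ i) x) ` {..<k})"
  shows "(f ^^ j) x \<in> span ((\<lambda>i. (f ^^ i) x) ` {..<k})"
proof -
  let ?K = "span ((\<lambda>i. (f ^^ i) x) ` {..<k})"
  have gen: "f y \<in> ?K" if y: "y \<in> (\<lambda>i. (f ^^ i) x) ` {..<k}" for y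
  proof -
    obtain i where i: "i < k" "y = (f ^^ i) x" using y by blast
    then have fy: "f y = (f ^^ Suc i) x" by simp
    show ?thesis
    proof (cases "Suc i = k")
      case True
      then show ?thesis using dep fy by simp
    next
      case False
      then have "(f ^^ Suc i) x \<in> (\<lambda>i. (f ^^ i) x) ` {..<k}"
        using i by (intro imageI) simp
      then show ?thesis unfolding fy by (rule span_base)
    qed
  qed
  have invariant: "f y \<in> ?K" if "y \<in> ?K" for y
    using that
  proof (induction rule: span_induct)
    case (step y)
    then show ?case by (rule gen)
  next
    show "subspace {y. f y \<in> ?K}"
      using \<open>linear f\<close> by (auto simp: subspace_def linear_0 linear_add linear_scale
          span_zero span_add span_scale)
  qed
  show ?thesis
  proof (induction j)
    case 0
    show ?case
    proof (cases k)
      case (Suc n)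
      then have "(f ^^ 0) x \<in> (\<lambda>i. (f ^^ i) x) ` {..<k}" by blast
      then show ?thesis by (rule span_base)
    qed (use dep in simp)
  qed (simp add: invariant)
qed

lemma funpow_eq_if_funpow_eq_upto_DIM:
  fixes f g :: "'v::euclidean_space \<Rightarrow> 'v"
  assumes "linear f" "linear g" and low: "\<And>j. j \<le> DIM('v) \<Longrightarrow> (g ^^ j) x = (f ^^ j) x"
  shows "(g ^^ j) x = (f ^^ j) x"
proof -
  obtain k where "k \<le> DIM('v)" and dep: "(f ^^ k) x \<in> span ((\<lambda>i. (f ^^ i) x) ` {..<k})"
    using krylov_dependent by blast
  have agree: "g b = f b" if b: "b \<in> (\<lambda>i. (f ^^ i) x) ` {..<k}" for b
  proof -
    obtain i where "i < k" and b_eq: "b = (f ^^ i) x" using b by blast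
    have "i \<le> DIM('v)" "Suc i \<le> DIM('v)" using \<open>i < k\<close> \<open>k \<le> DIM('v)\<close> by simp_all
    have "g b = g ((g ^^ i) x)" by (simp only: b_eq low[OF \<open>i \<le> DIM('v)\<close>])
    also have "\<dots> = (g ^^ Suc i) x" by simp
    also have "\<dots> = (f ^^ Suc i) x" by (rule low[OF \<open>Suc i \<le> DIM('v)\<close>])
    also have "\<dots> = f b" by (simp add: b_eq)
    finally show ?thesis .
  qed
  have "\<forall>i. g ((f ^^ i) x) = f ((f ^^ i) x)"
    using linear_eq_on_span[OF \<open>linear g\<close> \<open>linear f\<close> agree funpow_in_krylov_span[OF \<open>linear f\<close> dep]]
    by simp
  then have "\<forall>j. (g ^^ j) x = (f ^^ j) x"
    unfolding funpow_eq_iff_agree_on_orbit .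
  then show ?thesis ..
qed

lemma span_image_lessThan_sum:
  fixes g :: "nat \<Rightarrow> 'v::real_vector"
  assumes "y \<in> span (g ` {..<k})"
  obtains c where "y = (\<Sum>i<k. c i *\<^sub>R g i)"
proof -
  have "subspace (range (\<lambda>c. \<Sum>i<k. c i *\<^sub>R g i))"
    unfolding subspace_def
  proof safe
    show "0 \<in> range (\<lambda>c. \<Sum>i<k. c i *\<^sub>R g i)"
      by (rule range_eqI[of _ _ "\<lambda>_. 0"]) simp
    show "(\<Sum>i<k. c1 i *\<^sub>R g i) + (\<Sum>i<k. c2 i *\<^sub>R g i) \<in> range (\<lambda>c. \<Sum>i<k. c i *\<^sub>R g i)" for c1 c2
      by (rule range_eqI[of _ _ "\<lambda>i. c1 i + c2 i"]) (simp add: scaleR_add_left sum.distrib)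
    show "a *\<^sub>R (\<Sum>i<k. c i *\<^sub>R g i) \<in> range (\<lambda>c. \<Sum>i<k. c i *\<^sub>R g i)" for a c
      by (rule range_eqI[of _ _ "\<lambda>i. a * c i"]) (simp add: scaleR_sum_right)
  qed
  moreover have "g ` {..<k} \<subseteq> range (\<lambda>c. \<Sum>i<k. c i *\<^sub>R g i)"
  proof
    fix y assume "y \<in> g ` {..<k}"
    then obtain i where "i < k" "y = g i" by blast
    moreover have "(\<Sum>j<k. (if j = i then 1 else 0) *\<^sub>R g j) = (\<Sum>j<k. if j = i then g j else 0)"
      by (rule sum.cong) auto
    ultimately show "y \<in> range (\<lambda>c. \<Sum>i<k. c i *\<^sub>R g i)"
      by (intro range_eqI[of _ _ "\<lambda>j. if j = i then 1 else 0"]) simp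
  qed
  ultimately have "span (g ` {..<k}) \<subseteq> range (\<lambda>c. \<Sum>i<k. c i *\<^sub>R g i)"
    by (intro span_minimal)
  then have "y \<in> range (\<lambda>c. \<Sum>i<k. c i *\<^sub>R g i)" using assms by (rule subsetD)
  then show ?thesis using that by (rule rangeE)
qed

lemma matrix_funpow_recurrence:
  fixes A :: "real^'n^'n"
  obtains k c where "\<And>j v. (((*v) A) ^^ j) v = (\<Sum>i<k. c j i *\<^sub>R (((*v) A) ^^ i) v)"
proof -
  let ?f = "\<lambda>M::real^'n^'n. A ** M"
  have "linear ?f"
    by (rule linearI)
      (simp add: matrix_add_ldistrib,
        simp add: vec_eq_iff matrix_matrix_mult_def sum_distrib_left mult.left_commute)
  obtain k where dep: "(?f ^^ k) (mat 1) \<in> span ((\<lambda>i. (?f ^^ i) (mat 1)) ` {..<k})"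
    using krylov_dependent by blast
  have "\<exists>c. (?f ^^ j) (mat 1) = (\<Sum>i<k. c i *\<^sub>R (?f ^^ i) (mat 1))" for j
    by (rule span_image_lessThan_sum[OF funpow_in_krylov_span[OF \<open>linear ?f\<close> dep]]) blast
  then obtain c where c: "\<And>j. (?f ^^ j) (mat 1) = (\<Sum>i<k. c j i *\<^sub>R (?f ^^ i) (mat 1))"
    using choice[of "\<lambda>j c. (?f ^^ j) (mat 1) = (\<Sum>i<k. c i *\<^sub>R (?f ^^ i) (mat 1))"] by blast
  have power: "(?f ^^ j) (mat 1) *v v = (((*v) A) ^^ j) v" for j v
    by (induction j) (simp_all add: matrix_vector_mul_assoc[symmetric])
  have sum_mult: "(\<Sum>i\<in>I. M i) *v v = (\<Sum>i\<in>I. M i *v v)" for I and M :: "nat \<Rightarrow> real^'n^'n" and v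
    by (induction I rule: infinite_finite_induct) (simp_all add: matrix_vector_mult_add_rdistrib)
  have "(((*v) A) ^^ j) v = (\<Sum>i<k. c j i *\<^sub>R (((*v) A) ^^ i) v)" for j v
  proof -
    have "(((*v) A) ^^ j) v = (\<Sum>i<k. c j i *\<^sub>R (?f ^^ i) (mat 1)) *v v"
      by (simp only: power[symmetric] c[of j])
    also have "\<dots> = (\<Sum>i<k. c j i *\<^sub>R (((*v) A) ^^ i) v)"
      by (simp add: sum_mult power scaleR_matrix_vector_assoc[symmetric])
    finally show ?thesis .
  qed
  then show ?thesis by (rule that)
qed

definition Qmat :: "('s::finite \<Rightarrow> 'a \<Rightarrow> 's \<Rightarrow> real) \<Rightarrow> ('s \<Rightarrow> 'a) \<Rightarrow> real^'s^'s" where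
  "Qmat Q d = (\<chi> s s'. Q s (d s) s')"

lemma vec_lambda_funpow_Qmul:
  "vec_lambda ((Qmul Q d ^^ j) v) = (((*v) (Qmat Q d)) ^^ j) (vec_lambda v)"
  by (induction j) (simp_all add: vec_eq_iff matrix_vector_mult_def Qmul_def Qmat_def)

lemma Fset_CARD_funpow_eq:
  fixes Q :: "'s::finite \<Rightarrow> 'a \<Rightarrow> 's \<Rightarrow> real"
  assumes "d1 \<in> Fset Act Q CARD('s) W" "d2 \<in> Fset Act Q CARD('s) W"
  shows "(Qmul Q d2 ^^ j) W = (Qmul Q d1 ^^ j) W"
proof -
  have lin: "linear ((*v) (Qmat Q d))" for d by (rule matrix_vector_mul_linear)
  have "(((*v) (Qmat Q d2)) ^^ j) (vec_lambda W) = (((*v) (Qmat Q d1)) ^^ j) (vec_lambda W)"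
  proof (rule funpow_eq_if_funpow_eq_upto_DIM[OF lin lin])
    fix j :: nat assume "j \<le> DIM(real^'s)"
    then have "(Qmul Q d2 ^^ j) W = (Qmul Q d1 ^^ j) W"
      using Fset_funpow_eq[OF assms(2,1)] by simp
    then show "(((*v) (Qmat Q d2)) ^^ j) (vec_lambda W) = (((*v) (Qmat Q d1)) ^^ j) (vec_lambda W)"
      by (simp only: vec_lambda_funpow_Qmul[symmetric])
  qed
  then have "vec_lambda ((Qmul Q d2 ^^ j) W) $ s = vec_lambda ((Qmul Q d1 ^^ j) W) $ s" for s
    by (simp only: vec_lambda_funpow_Qmul)
  then show ?thesis by (simp add: fun_eq_iff)
qed

lemma Qmul_funpow_recurrence:
  fixes Q :: "'s::finite \<Rightarrow> 'a \<Rightarrow> 's \<Rightarrow> real"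
  obtains k c where "\<And>j v s. (Qmul Q d ^^ j) v s = (\<Sum>i<k. c j i * (Qmul Q d ^^ i) v s)"
proof -
  obtain k c where rec: "\<And>j v. (((*v) (Qmat Q d)) ^^ j) v = (\<Sum>i<k. c j i *\<^sub>R (((*v) (Qmat Q d)) ^^ i) v)"
    by (rule matrix_funpow_recurrence[of "Qmat Q d"]) (rule that)
  have "(Qmul Q d ^^ j) v s = (\<Sum>i<k. c j i * (Qmul Q d ^^ i) v s)" for j v s
  proof -
    have "(Qmul Q d ^^ j) v s = vec_lambda ((Qmul Q d ^^ j) v) $ s" by simp
    also have "\<dots> = (\<Sum>i<k. c j i *\<^sub>R vec_lambda ((Qmul Q d ^^ i) v)) $ s"
      by (simp only: vec_lambda_funpow_Qmul rec[of j])
    also have "\<dots> = (\<Sum>i<k. c j i * (Qmul Q d ^^ i) v s)" by (simp add: sum_component)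
    finally show ?thesis .
  qed
  then show ?thesis by (fact that)
qed

lemma Qmul_diff: "Qmul Q d (\<lambda>s. V s - U s) s = Qmul Q d V s - Qmul Q d U s"
  unfolding Qmul_def by (simp add: algebra_simps sum_subtractf)

lemma Qmul_funpow_diff:
  "(Qmul Q d ^^ j) (\<lambda>s. V s - U s) = (\<lambda>s. (Qmul Q d ^^ j) V s - (Qmul Q d ^^ j) U s)"
  by (induction j) (simp_all add: Qmul_diff[abs_def])

lemma Qmul_sum: "Qmul Q d (\<lambda>s. \<Sum>i\<in>I. c i * V i s) s = (\<Sum>i\<in>I. c i * Qmul Q d (V i) s)"
  unfolding Qmul_def by (simp add: sum_distrib_left sum.swap[of _ I] mult.left_commute)

lemma continuous_on_Qmul_funpow:
  assumes "\<And>s. continuous_on S (\<lambda>t. V t s)"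
  shows "continuous_on S (\<lambda>t. (Qmul Q d ^^ j) (V t) s)"
proof (induction j arbitrary: s)
  case (Suc j)
  then show ?case unfolding funpow.simps o_apply Qmul_def by (intro continuous_intros)
qed (use assms in simp)

lemma has_integral_Qmul:
  assumes "\<And>s. ((\<lambda>\<tau>. V \<tau> s) has_integral X s) S"
  shows "((\<lambda>\<tau>. Qmul Q d (V \<tau>) s) has_integral Qmul Q d X s) S"
  unfolding Qmul_def using assms by (intro has_integral_sum has_integral_mult_right) auto

lemma has_integral_Qmul_funpow:
  assumes "\<And>s. ((\<lambda>\<tau>. V \<tau> s) has_integral X s) S"
  shows "((\<lambda>\<tau>. (Qmul Q d ^^ j) (V \<tau>) s) has_integral (Qmul Q d ^^ j) X s) S"
proof (induction j arbitrary: s)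
  case (Suc j)
  then show ?case unfolding funpow.simps o_apply Qmul_def
    by (intro has_integral_sum has_integral_mult_right) auto
qed (use assms in simp)

lemma Qmul_bounded:
  assumes "ctmdp Act Q"
  obtains C where "0 \<le> C" and "\<And>d v s. d \<in> decisions Act \<Longrightarrow> \<bar>Qmul Q d v s\<bar> \<le> C * (\<Sum>s'\<in>UNIV. \<bar>v s'\<bar>)"
proof
  define C where "C = (\<Sum>s\<in>UNIV. \<Sum>s'\<in>UNIV. \<Sum>a\<in>Act s. \<bar>Q s a s'\<bar>)"
  show "0 \<le> C" unfolding C_def by (intro sum_nonneg) auto
  have rate_le: "\<bar>Q s a s'\<bar> \<le> C" if "a \<in> Act s" for s a s'
  proof -
    have "finite (Act s)" using assms unfolding ctmdp_def by auto
    then have "\<bar>Q s a s'\<bar> \<le> (\<Sum>a\<in>Act s. \<bar>Q s a s'\<bar>)"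
      using that by (intro member_le_sum) auto
    also have "\<dots> \<le> (\<Sum>s'\<in>UNIV. \<Sum>a\<in>Act s. \<bar>Q s a s'\<bar>)"
      by (rule member_le_sum[where f = "\<lambda>s'. \<Sum>a\<in>Act s. \<bar>Q s a s'\<bar>"]) (auto intro: sum_nonneg)
    also have "\<dots> \<le> C" unfolding C_def
      by (rule member_le_sum[where f = "\<lambda>s. \<Sum>s'\<in>UNIV. \<Sum>a\<in>Act s. \<bar>Q s a s'\<bar>"]) (auto intro: sum_nonneg)
    finally show ?thesis .
  qed
  fix d v s assume "d \<in> decisions Act"
  have "\<bar>Qmul Q d v s\<bar> \<le> (\<Sum>s'\<in>UNIV. \<bar>Q s (d s) s'\<bar> * \<bar>v s'\<bar>)"
    unfolding Qmul_def by (rule order_trans[OF sum_abs]) (simp add: abs_mult)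
  also have "\<dots> \<le> (\<Sum>s'\<in>UNIV. C * \<bar>v s'\<bar>)"
    using \<open>d \<in> decisions Act\<close> rate_le unfolding decisions_def by (intro sum_mono mult_right_mono) auto
  finally show "\<bar>Qmul Q d v s\<bar> \<le> C * (\<Sum>s'\<in>UNIV. \<bar>v s'\<bar>)" by (simp add: sum_distrib_left)
qed

section \<open>Gronwall-type uniqueness\<close>

lemma gronwall_zero:
  fixes u :: "real \<Rightarrow> real"
  assumes "a \<le> b" and cont: "continuous_on {a..b} u" and nonneg: "\<And>t. t \<in> {a..b} \<Longrightarrow> 0 \<le> u t"
    and "0 \<le> C" and le: "\<And>t. t \<in> {a..b} \<Longrightarrow> u t \<le> C * integral {a..t} u"
    and t: "t \<in> {a..b}"
  shows "u t = 0"
proof -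
  define F where "F x = integral {a..x} u" for x
  have F_cont: "continuous_on {a..b} F"
    unfolding F_def by (rule indefinite_integral_continuous_1[OF integrable_continuous_interval[OF cont]])
  have F_deriv: "(F has_real_derivative u x) (at x)" if "a < x" "x < b" for x
  proof -
    have "(F has_real_derivative u x) (at x within {a..b})"
      unfolding F_def using integral_has_real_derivative[OF cont] that by auto
    moreover have "at x within {a..b} = at x"
      using that by (intro at_within_interior) auto
    ultimately show ?thesis by simp
  qed
  \<comment> \<open>exp(-Cx) F x is non-increasing and vanishes at a\<close>
  have "exp (- C * t) * F t \<le> exp (- C * a) * F a"
  proof (rule DERIV_nonpos_imp_decreasing_open[of a t])
    show "a \<le> t" using t by simp
    show "continuous_on {a..t} (\<lambda>x. exp (- C * x) * F x)"
      using t by (intro continuous_intros continuous_on_subset[OF F_cont]) auto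
    fix x assume x: "a < x" "x < t"
    have "u x \<le> C * F x" using le x t unfolding F_def by auto
    then have "exp (- C * x) * u x + (- C * exp (- C * x)) * F x \<le> 0"
      by (simp add: algebra_simps)
    moreover have "((\<lambda>x. exp (- C * x) * F x) has_real_derivative
        exp (- C * x) * u x + (- C * exp (- C * x)) * F x) (at x)"
      using F_deriv[of x] x t by (auto intro!: derivative_eq_intros)
    ultimately show "\<exists>y. ((\<lambda>x. exp (- C * x) * F x) has_real_derivative y) (at x) \<and> y \<le> 0"
      by blast
  qed
  then have "F t \<le> 0" by (simp add: F_def mult_le_0_iff)
  with le[OF t] \<open>0 \<le> C\<close> have "u t \<le> 0" unfolding F_def
    by (smt (verit) mult_nonneg_nonpos)
  with nonneg[OF t] show ?thesis by simp
qed

lemma integral_system_vanishes: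
  fixes \<phi> \<psi> :: "'i \<Rightarrow> real \<Rightarrow> real"
  assumes "finite I" "a \<le> b" "0 \<le> C"
    and cont: "\<And>i. i \<in> I \<Longrightarrow> continuous_on {a..b} (\<phi> i)"
    and int: "\<And>i t. i \<in> I \<Longrightarrow> t \<in> {a..b} \<Longrightarrow> (\<psi> i has_integral \<phi> i t) {a..t}"
    and bound: "\<And>i \<tau>. i \<in> I \<Longrightarrow> \<tau> \<in> {a..b} \<Longrightarrow> \<bar>\<psi> i \<tau>\<bar> \<le> C * (\<Sum>j\<in>I. \<bar>\<phi> j \<tau>\<bar>)"
    and "i \<in> I" "t \<in> {a..b}"
  shows "\<phi> i t = 0"
proof -
  define u where "u \<tau> = (\<Sum>j\<in>I. \<bar>\<phi> j \<tau>\<bar>)" for \<tau>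
  have u_cont: "continuous_on {a..b} u"
    unfolding u_def using cont by (intro continuous_intros) auto
  have phi_le: "\<bar>\<phi> i t\<bar> \<le> C * integral {a..t} u" if "i \<in> I" "t \<in> {a..b}" for i t
  proof -
    have "(u has_integral integral {a..t} u) {a..t}"
      using integrable_continuous_interval[OF continuous_on_subset[OF u_cont]] that by auto
    then have Cu: "((\<lambda>\<tau>. C * u \<tau>) has_integral C * integral {a..t} u) {a..t}"
      by (rule has_integral_mult_right)
    have psi: "(\<psi> i has_integral \<phi> i t) {a..t}" using int that by auto
    have "\<bar>\<psi> i x\<bar> \<le> C * u x" if "x \<in> {a..t}" for x
      using bound \<open>i \<in> I\<close> \<open>t \<in> {a..b}\<close> that unfolding u_def by auto
    then have "\<phi> i t \<le> C * integral {a..t} u" "- \<phi> i t \<le> C * integral {a..t} u"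
      by (intro has_integral_le[OF psi Cu] has_integral_le[OF has_integral_neg[OF psi] Cu];
          force simp: abs_le_iff)+
    then show ?thesis by linarith
  qed
  have u_le: "u t \<le> real (card I) * C * integral {a..t} u" if t: "t \<in> {a..b}" for t
  proof -
    have "(\<Sum>j\<in>I. \<bar>\<phi> j t\<bar>) \<le> (\<Sum>j\<in>I. C * integral {a..t} u)"
      by (rule sum_mono) (use phi_le t in auto)
    then show ?thesis by (simp add: u_def)
  qed
  have "u t = 0"
    by (rule gronwall_zero[OF \<open>a \<le> b\<close> u_cont _ _ u_le])
      (use assms in \<open>auto simp: u_def\<close>)
  then show ?thesis using assms unfolding u_def by (simp add: sum_nonneg_eq_0_iff)
qed

lemma integral_chain_vanishes:
  fixes h :: "nat \<Rightarrow> real \<Rightarrow> real"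
  assumes "a \<le> b"
    and cont: "\<And>j. continuous_on {a..b} (h j)"
    and int: "\<And>j t. t \<in> {a..b} \<Longrightarrow> (h (Suc j) has_integral h j t) {a..t}"
    and rec: "\<And>j t. h j t = (\<Sum>i<k. c j i * h i t)"
    and t: "t \<in> {a..b}"
  shows "h j t = 0"
proof -
  define C where "C = (\<Sum>j<k. \<Sum>i<k. \<bar>c (Suc j) i\<bar>)"
  have vanish: "h i t = 0" if "i < k" for i
  proof (rule integral_system_vanishes[of "{..<k}" a b C h "\<lambda>j. h (Suc j)"])
    fix j \<tau> assume "j \<in> {..<k}" "\<tau> \<in> {a..b}"
    have "\<bar>h (Suc j) \<tau>\<bar> \<le> (\<Sum>i<k. \<bar>c (Suc j) i\<bar> * \<bar>h i \<tau>\<bar>)"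
      unfolding rec[of "Suc j"] by (rule order_trans[OF sum_abs]) (simp add: abs_mult)
    also have "\<dots> \<le> (\<Sum>i<k. \<bar>c (Suc j) i\<bar> * (\<Sum>l<k. \<bar>h l \<tau>\<bar>))"
      by (intro sum_mono mult_left_mono member_le_sum) auto
    also have "\<dots> \<le> C * (\<Sum>l<k. \<bar>h l \<tau>\<bar>)"
      unfolding C_def sum_distrib_right[symmetric] using \<open>j \<in> {..<k}\<close>
      by (intro mult_right_mono member_le_sum[where f = "\<lambda>j. \<Sum>i<k. \<bar>c (Suc j) i\<bar>"])
        (auto intro: sum_nonneg)
    finally show "\<bar>h (Suc j) \<tau>\<bar> \<le> C * (\<Sum>l<k. \<bar>h l \<tau>\<bar>)" .
  qed (use \<open>a \<le> b\<close> cont int t that in \<open>auto simp: C_def intro: sum_nonneg\<close>)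
  show ?thesis by (simp add: rec[of j t] vanish)
qed

lemma continuous_on_if_has_integral_interval:
  fixes X :: "real \<Rightarrow> real"
  assumes "a \<le> b" and int: "\<And>t. t \<in> {a..b} \<Longrightarrow> (f has_integral (X t - c)) {a..t}"
  shows "continuous_on {a..b} X"
proof -
  have "f integrable_on {a..b}" using int \<open>a \<le> b\<close> by auto
  then have "continuous_on {a..b} (\<lambda>t. c + integral {a..t} f)"
    by (intro continuous_intros indefinite_integral_continuous_1)
  moreover have "c + integral {a..t} f = X t" if "t \<in> {a..b}" for t
    using int[OF that] by (simp add: integral_unique)
  ultimately show ?thesis
    using continuous_on_cong[of "{a..b}" "{a..b}" "\<lambda>t. c + integral {a..t} f" X] by simp
qed

lemma has_integral_interval_diff:
  fixes f :: "real \<Rightarrow> real"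
  assumes "c \<le> a" "a \<le> t" "(f has_integral X) {c..t}" "(f has_integral Y) {c..a}"
  shows "(f has_integral (X - Y)) {a..t}"
proof -
  have "f integrable_on {a..t}"
    by (rule integrable_subinterval_real[of f c t]) (use assms in auto)
  then have a_t: "(f has_integral integral {a..t} f) {a..t}" by auto
  have "(f has_integral (Y + integral {a..t} f)) {c..t}"
    by (rule has_integral_combine[OF assms(1,2,4) a_t])
  then have "X = Y + integral {a..t} f" using has_integral_unique[OF assms(3)] by blast
  then show ?thesis using a_t by simp
qed

definition integral_solution ::
  "('s::finite \<Rightarrow> 'a \<Rightarrow> 's \<Rightarrow> real) \<Rightarrow> (real \<Rightarrow> 's \<Rightarrow> 'a) \<Rightarrow> ('s \<Rightarrow> real) \<Rightarrow> real
     \<Rightarrow> (real \<Rightarrow> 's \<Rightarrow> real) \<Rightarrow> bool" where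
  "integral_solution Q p w0 T W \<longleftrightarrow>
     (\<forall>t\<in>{0..T}. \<forall>s. ((\<lambda>\<tau>. Qmul Q (p \<tau>) (W \<tau>) s) has_integral (W t s - w0 s)) {0..t})"

lemma value_fn_iff_integral_solution:
  "value_fn Q g B \<pi> W \<longleftrightarrow>
     integral_solution Q (\<lambda>\<tau>. \<pi> (B - \<tau>)) (\<lambda>s. if s = g then 1 else 0) B W"
  unfolding value_fn_def integral_solution_def ..

lemma integral_solution_mono:
  "integral_solution Q p w0 T W \<Longrightarrow> T' \<le> T \<Longrightarrow> integral_solution Q p w0 T' W"
  unfolding integral_solution_def by auto

lemma integral_solution_continuous:
  assumes "integral_solution Q p w0 T W" "0 \<le> T"
  shows "continuous_on {0..T} (\<lambda>t. W t s)"
  using assms unfolding integral_solution_def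
  by (intro continuous_on_if_has_integral_interval[where c = "w0 s"]) auto

lemma integral_solution_cong:
  assumes "integral_solution Q p w0 T W"
    and "\<And>\<tau>. \<tau> \<in> {0..<T} \<Longrightarrow> Qmul Q (p' \<tau>) (W \<tau>) = Qmul Q (p \<tau>) (W \<tau>)"
  shows "integral_solution Q p' w0 T W"
  unfolding integral_solution_def
proof (intro ballI allI)
  fix t s assume t: "t \<in> {0..T}"
  show "((\<lambda>\<tau>. Qmul Q (p' \<tau>) (W \<tau>) s) has_integral (W t s - w0 s)) {0..t}"
  proof (rule has_integral_spike_finite[of "{T}"])
    show "((\<lambda>\<tau>. Qmul Q (p \<tau>) (W \<tau>) s) has_integral (W t s - w0 s)) {0..t}"
      using assms(1) t unfolding integral_solution_def by blast
  qed (use assms(2) t in auto)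
qed

lemma integral_solution_unique:
  assumes "ctmdp Act Q" and p: "\<And>\<tau>. \<tau> \<in> {0..T} \<Longrightarrow> p \<tau> \<in> decisions Act"
    and sol1: "integral_solution Q p w0 T W1" and sol2: "integral_solution Q p w0 T W2"
    and "t \<in> {0..T}"
  shows "W1 t = W2 t"
proof
  fix s
  obtain C where "0 \<le> C"
    and C: "\<And>d v s. d \<in> decisions Act \<Longrightarrow> \<bar>Qmul Q d v s\<bar> \<le> C * (\<Sum>s'\<in>UNIV. \<bar>v s'\<bar>)"
    using Qmul_bounded[OF \<open>ctmdp Act Q\<close>] by blast
  have "W1 t s - W2 t s = 0"
  proof (rule integral_system_vanishes[where \<phi> = "\<lambda>s t. W1 t s - W2 t s"
        and \<psi> = "\<lambda>s \<tau>. Qmul Q (p \<tau>) (W1 \<tau>) s - Qmul Q (p \<tau>) (W2 \<tau>) s" and I = UNIV])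
    show "continuous_on {0..T} (\<lambda>t. W1 t s - W2 t s)" for s
      using integral_solution_continuous[OF sol1] integral_solution_continuous[OF sol2] \<open>t \<in> {0..T}\<close>
      by (intro continuous_intros) auto
    show "((\<lambda>\<tau>. Qmul Q (p \<tau>) (W1 \<tau>) s - Qmul Q (p \<tau>) (W2 \<tau>) s) has_integral W1 t s - W2 t s) {0..t}"
      if "t \<in> {0..T}" for s t
    proof -
      have "((\<lambda>\<tau>. Qmul Q (p \<tau>) (W1 \<tau>) s) has_integral (W1 t s - w0 s)) {0..t}"
        "((\<lambda>\<tau>. Qmul Q (p \<tau>) (W2 \<tau>) s) has_integral (W2 t s - w0 s)) {0..t}"
        using sol1 sol2 that unfolding integral_solution_def by blast+
      from has_integral_diff[OF this] show ?thesis by simp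
    qed
    show "\<bar>Qmul Q (p \<tau>) (W1 \<tau>) s - Qmul Q (p \<tau>) (W2 \<tau>) s\<bar> \<le> C * (\<Sum>s'\<in>UNIV. \<bar>W1 \<tau> s' - W2 \<tau> s'\<bar>)"
      if "\<tau> \<in> {0..T}" for s \<tau>
      using C[OF p[OF that], of "\<lambda>s'. W1 \<tau> s' - W2 \<tau> s'" s] by (simp add: Qmul_diff)
  qed (use \<open>0 \<le> C\<close> \<open>t \<in> {0..T}\<close> in auto)
  then show "W1 t s = W2 t s" by simp
qed

lemma funpow_eq_along_trajectory:
  fixes Q :: "'s::finite \<Rightarrow> 'a \<Rightarrow> 's \<Rightarrow> real" and W :: "real \<Rightarrow> 's \<Rightarrow> real"
  assumes "a \<le> b" and cont: "\<And>s. continuous_on {a..b} (\<lambda>t. W t s)"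
    and follows: "\<And>t s. t \<in> {a..b} \<Longrightarrow> ((\<lambda>\<tau>. Qmul Q d1 (W \<tau>) s) has_integral (W t s - W a s)) {a..t}"
    and init: "\<And>j. (Qmul Q d2 ^^ j) (W a) = (Qmul Q d1 ^^ j) (W a)"
    and t: "t \<in> {a..b}"
  shows "(Qmul Q d2 ^^ j) (W t) = (Qmul Q d1 ^^ j) (W t)"
proof -
  obtain k c where rec: "\<And>j v s. (Qmul Q d1 ^^ j) v s = (\<Sum>i<k. c j i * (Qmul Q d1 ^^ i) v s)"
    by (rule Qmul_funpow_recurrence[of Q d1]) (rule that)
  \<comment> \<open>the defect of d2 against d1 along the Krylov sequence of the trajectory\<close>
  define h where "h s j t = Qmul Q d2 ((Qmul Q d1 ^^ j) (W t)) s - Qmul Q d1 ((Qmul Q d1 ^^ j) (W t)) s"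
    for s j t
  have h_a: "h s j a = 0" for s j
    using init funpow_eq_iff_agree_on_orbit[of "Qmul Q d2" "W a" "Qmul Q d1"] unfolding h_def by simp
  have Qmul_cont: "continuous_on {a..b} (\<lambda>t. Qmul Q d ((Qmul Q d1 ^^ j) (W t)) s)" for d j s
    using continuous_on_Qmul_funpow[where j = 1, OF continuous_on_Qmul_funpow[OF cont]] by simp
  have h_int: "(h s (Suc j) has_integral h s j t) {a..t}" if "t \<in> {a..b}" for s j t
  proof -
    have "((\<lambda>\<tau>. (Qmul Q d1 ^^ j) (Qmul Q d1 (W \<tau>)) s) has_integral
        (Qmul Q d1 ^^ j) (\<lambda>s. W t s - W a s) s) {a..t}" for s
      by (rule has_integral_Qmul_funpow) (rule follows[OF that])
    then have "((\<lambda>\<tau>. Qmul Q d ((Qmul Q d1 ^^ j) (Qmul Q d1 (W \<tau>))) s) has_integral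
        Qmul Q d ((Qmul Q d1 ^^ j) (\<lambda>s. W t s - W a s)) s) {a..t}" for d s
      by (rule has_integral_Qmul)
    from has_integral_diff[OF this[of d2 s] this[of d1 s]] show ?thesis
      using h_a[of s j] unfolding h_def by (simp add: funpow_swap1 Qmul_funpow_diff Qmul_diff)
  qed
  have h_rec: "h s j t = (\<Sum>i<k. c j i * h s i t)" for s j t
  proof -
    have "(Qmul Q d1 ^^ j) (W t) = (\<lambda>s. \<Sum>i<k. c j i * (Qmul Q d1 ^^ i) (W t) s)"
      by (rule ext) (rule rec)
    then show ?thesis unfolding h_def by (simp add: Qmul_sum sum_subtractf right_diff_distrib)
  qed
  have "h s j t = 0" for s j
    by (rule integral_chain_vanishes[OF \<open>a \<le> b\<close> _ h_int h_rec t])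
      (simp add: h_def Qmul_cont continuous_on_diff)
  then have "\<forall>j. Qmul Q d2 ((Qmul Q d1 ^^ j) (W t)) = Qmul Q d1 ((Qmul Q d1 ^^ j) (W t))"
    unfolding h_def by (simp add: fun_eq_iff)
  then show ?thesis using funpow_eq_iff_agree_on_orbit by metis
qed

section \<open>Policies that are greedy almost everywhere\<close>

lemma less_ereal_add_SupD:
  assumes "ereal x < ereal y + Sup (ereal ` S)"
  obtains \<delta> where "\<delta> \<in> S" "x < y + \<delta>"
proof -
  have "ereal (x - y) < Sup (ereal ` S)"
    using assms by (cases "Sup (ereal ` S)") auto
  then obtain \<delta> where "\<delta> \<in> S" "x - y < \<delta>" by (auto simp: less_Sup_iff)
  then show ?thesis using that by simp
qed

lemma Delta_window:
  assumes "ereal t2 < ereal t0 + Delta Act Q k B W t0 d" "t2 \<le> B" "\<tau> \<in> {t0..t2}"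
  shows "d \<in> Fset Act Q k (W \<tau>)"
proof -
  obtain \<delta> where "t2 < t0 + \<delta>"
    and \<delta>: "\<forall>t. t0 \<le> t \<and> t < t0 + \<delta> \<and> t \<le> B \<longrightarrow> d \<in> Fset Act Q k (W t)"
    by (rule less_ereal_add_SupD[OF assms(1)[unfolded Delta_def]]) simp
  moreover have "t0 \<le> \<tau> \<and> \<tau> < t0 + \<delta> \<and> \<tau> \<le> B" using assms(2,3) \<open>t2 < t0 + \<delta>\<close> by auto
  ultimately show ?thesis by blast
qed

locale bellman_optimal =
  fixes Act :: "'s::finite \<Rightarrow> 'a set" and Q :: "'s \<Rightarrow> 'a \<Rightarrow> 's \<Rightarrow> real"
    and good :: 's and B :: real and \<pi> :: "real \<Rightarrow> 's \<Rightarrow> 'a" and W :: "real \<Rightarrow> 's \<Rightarrow> real"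
  assumes ctmdp: "ctmdp Act Q" and B_pos: "0 < B" and W_value: "value_fn Q good B \<pi> W"
    and optimal: "AE t in lborel. t \<in> {0..B} \<longrightarrow> \<pi> (B - t) \<in> Fset Act Q 1 (W t)"
begin

abbreviation "u_good \<equiv> \<lambda>s. if s = good then 1 else 0"

lemma solution: "integral_solution Q (\<lambda>\<tau>. \<pi> (B - \<tau>)) u_good B W"
  using W_value by (simp only: value_fn_iff_integral_solution)

lemma has_integral_greedy_decision:
  assumes "0 \<le> a" "b \<le> B" and d: "\<And>\<tau>. \<tau> \<in> {a..b} \<Longrightarrow> d \<in> Fset Act Q 1 (W \<tau>)"
    and t: "t \<in> {a..b}"
  shows "((\<lambda>\<tau>. Qmul Q d (W \<tau>) s) has_integral (W t s - W a s)) {a..t}"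
proof -
  let ?f = "\<lambda>\<tau>. Qmul Q (\<pi> (B - \<tau>)) (W \<tau>) s"
  have "(?f has_integral (W t s - u_good s)) {0..t}" "(?f has_integral (W a s - u_good s)) {0..a}"
    using solution assms unfolding integral_solution_def by auto
  from has_integral_interval_diff[OF _ _ this] have diff: "(?f has_integral (W t s - W a s)) {a..t}"
    using assms by auto
  obtain N where "negligible N"
    and N: "\<And>x. x \<notin> N \<Longrightarrow> x \<in> {0..B} \<longrightarrow> \<pi> (B - x) \<in> Fset Act Q 1 (W x)"
    using AE_completion[OF optimal] unfolding eventually_ae_filter_negligible by blast
  have "Qmul Q d (W x) s = ?f x" if x: "x \<in> {a..t} - N" for x
  proof -
    have "x \<in> {a..b}" "x \<in> {0..B}" using x t assms by auto
    then have "d \<in> Fset Act Q 1 (W x)" "\<pi> (B - x) \<in> Fset Act Q 1 (W x)" using d N x by auto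
    from Fset_funpow_eq[OF this, of 1] show ?thesis by simp
  qed
  from \<open>negligible N\<close> this diff show ?thesis by (rule has_integral_spike)
qed

lemma funpow_eq_on_window:
  assumes "0 \<le> a" "b \<le> B"
    and d1: "\<And>\<tau>. \<tau> \<in> {a..b} \<Longrightarrow> d1 \<in> Fset Act Q 1 (W \<tau>)"
    and "d1 \<in> Fset Act Q CARD('s) (W a)" "d2 \<in> Fset Act Q CARD('s) (W a)"
    and "t \<in> {a..b}"
  shows "(Qmul Q d2 ^^ j) (W t) = (Qmul Q d1 ^^ j) (W t)"
proof (rule funpow_eq_along_trajectory[where a = a and b = b])
  show "continuous_on {a..b} (\<lambda>t. W t s)" for s
  proof (rule continuous_on_subset[of "{0..B}"])
    show "continuous_on {0..B} (\<lambda>t. W t s)"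
      using integral_solution_continuous[OF solution] B_pos by simp
  qed (use assms in auto)
  show "((\<lambda>\<tau>. Qmul Q d1 (W \<tau>) s) has_integral W t s - W a s) {a..t}" if "t \<in> {a..b}" for t s
    by (rule has_integral_greedy_decision[OF assms(1,2) d1 that])
  show "(Qmul Q d2 ^^ j) (W a) = (Qmul Q d1 ^^ j) (W a)" for j
    by (rule Fset_CARD_funpow_eq[OF assms(4,5)])
qed (use \<open>t \<in> {a..b}\<close> in auto)

lemma value_eq_after_switch:
  assumes "T \<le> B" "policy Act B \<pi>'" "value_fn Q good B \<pi>' W'"
    and same_Qmul: "\<And>\<tau>. \<tau> \<in> {0..<T} \<Longrightarrow> Qmul Q (\<pi>' (B - \<tau>)) (W \<tau>) = Qmul Q (\<pi> (B - \<tau>)) (W \<tau>)"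
    and "t \<in> {0..T}"
  shows "W' t = W t"
proof (rule integral_solution_unique[OF ctmdp _ _ _ \<open>t \<in> {0..T}\<close>])
  show "\<pi>' (B - \<tau>) \<in> decisions Act" if "\<tau> \<in> {0..T}" for \<tau>
    using \<open>policy Act B \<pi>'\<close> that \<open>T \<le> B\<close> unfolding policy_def by auto
  show "integral_solution Q (\<lambda>\<tau>. \<pi>' (B - \<tau>)) u_good T W'"
    using \<open>value_fn Q good B \<pi>' W'\<close> \<open>T \<le> B\<close>
    by (simp add: value_fn_iff_integral_solution integral_solution_mono)
  show "integral_solution Q (\<lambda>\<tau>. \<pi>' (B - \<tau>)) u_good T W"
    using integral_solution_mono[OF solution \<open>T \<le> B\<close>] same_Qmul by (rule integral_solution_cong)
qed

lemma Fset_persists: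
  assumes "0 \<le> t0" "t1 \<le> B"
    and "d1 \<in> Fset Act Q (Suc CARD('s)) (W t0)" "d2 \<in> Fset Act Q (Suc CARD('s)) (W t0)"
    and d1: "\<And>\<tau>. \<tau> \<in> {t0..t1} \<Longrightarrow> d1 \<in> Fset Act Q (Suc CARD('s)) (W \<tau>)"
    and t: "t \<in> {t0..t1}"
  shows "d2 \<in> Fset Act Q (Suc CARD('s)) (W t)"
proof -
  have "(Qmul Q d2 ^^ j) (W t) = (Qmul Q d1 ^^ j) (W t)" for j
  proof (rule funpow_eq_on_window[OF assms(1,2) _ _ _ t])
    show "d1 \<in> Fset Act Q 1 (W \<tau>)" if "\<tau> \<in> {t0..t1}" for \<tau>
      using d1[OF that] by (rule Fset_antimonoD) simp
    show "d1 \<in> Fset Act Q CARD('s) (W t0)" "d2 \<in> Fset Act Q CARD('s) (W t0)"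
      using assms(3,4) by (auto elim: Fset_antimonoD)
  qed
  with d1[OF t] show ?thesis
    using Fset_iff_if_funpow_eq[OF Fset_decisions[OF assms(4)] Fset_decisions[OF assms(3)]] by blast
qed

lemma Delta_eq:
  assumes "0 \<le> t0"
    and "d1 \<in> Fset Act Q (Suc CARD('s)) (W t0)" "d2 \<in> Fset Act Q (Suc CARD('s)) (W t0)"
  shows "Delta Act Q (Suc CARD('s)) B W t0 d1 = Delta Act Q (Suc CARD('s)) B W t0 d2"
proof -
  let ?S = "\<lambda>d. {\<delta>. 0 < \<delta> \<and> (\<forall>t. t0 \<le> t \<and> t < t0 + \<delta> \<and> t \<le> B \<longrightarrow>
      d \<in> Fset Act Q (Suc CARD('s)) (W t))}"
  have "?S d \<subseteq> ?S d'"
    if "d \<in> Fset Act Q (Suc CARD('s)) (W t0)" "d' \<in> Fset Act Q (Suc CARD('s)) (W t0)" for d d'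
  proof safe
    fix \<delta> t assume "0 < \<delta>"
      and \<delta>: "\<forall>t. t0 \<le> t \<and> t < t0 + \<delta> \<and> t \<le> B \<longrightarrow> d \<in> Fset Act Q (Suc CARD('s)) (W t)"
      and "t0 \<le> t" "t < t0 + \<delta>" "t \<le> B"
    then show "d' \<in> Fset Act Q (Suc CARD('s)) (W t)"
      using Fset_persists[OF \<open>0 \<le> t0\<close> \<open>t \<le> B\<close> that, of t] by auto
  qed
  from this[OF assms(2,3)] this[OF assms(3,2)] have "?S d1 = ?S d2" by (rule subset_antisym)
  then show ?thesis unfolding Delta_def by simp
qed

lemma optimal_after_switch:
  assumes "0 \<le> t0" "t0 \<le> \<delta>1" "\<delta>1 < \<delta>2" "\<delta>2 \<le> B"
    and "d1 \<in> Fset Act Q (Suc CARD('s)) (W t0)"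
    and "ereal \<delta>2 < ereal t0 + Delta Act Q (Suc CARD('s)) B W t0 d1"
    and d: "d \<in> Fset Act Q CARD('s) (W t0)" and \<pi>_d: "\<And>t. t \<in> {\<delta>1..<\<delta>2} \<Longrightarrow> \<pi> (B - t) = d"
    and "policy Act B \<pi>'" and "value_fn Q good B \<pi>' W'"
    and \<pi>'_\<pi>: "\<And>t. t \<in> {0..<\<delta>1} \<Longrightarrow> \<pi>' (B - t) = \<pi> (B - t)"
    and d': "d' \<in> Fset Act Q CARD('s) (W t0)" and \<pi>'_d': "\<And>t. t \<in> {\<delta>1..<\<delta>2} \<Longrightarrow> \<pi>' (B - t) = d'"
  shows "AE t in lborel. t \<in> {0..<\<delta>2} \<longrightarrow> \<pi>' (B - t) \<in> Fset Act Q 1 (W' t)"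
proof -
  have window: "d1 \<in> Fset Act Q 1 (W \<tau>)" if "\<tau> \<in> {t0..\<delta>2}" for \<tau>
    using Delta_window[OF assms(6,4) that] by (rule Fset_antimonoD) simp
  have d1: "d1 \<in> Fset Act Q CARD('s) (W t0)"
    using assms(5) by (rule Fset_antimonoD) simp
  have powers: "(Qmul Q e ^^ j) (W \<tau>) = (Qmul Q d1 ^^ j) (W \<tau>)"
    if "e \<in> {d, d'}" "\<tau> \<in> {t0..\<delta>2}" for e j \<tau>
    by (rule funpow_eq_on_window[OF assms(1,4) window d1 _ that(2)]) (use that d d' in auto)
  have same_Qmul: "Qmul Q (\<pi>' (B - \<tau>)) (W \<tau>) = Qmul Q (\<pi> (B - \<tau>)) (W \<tau>)" if "\<tau> \<in> {0..<\<delta>2}" for \<tau>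
  proof (cases "\<tau> < \<delta>1")
    case False
    with that \<open>t0 \<le> \<delta>1\<close> have "\<tau> \<in> {\<delta>1..<\<delta>2}" "\<tau> \<in> {t0..\<delta>2}" by auto
    then show ?thesis using powers[of _ \<tau> 1] \<pi>_d \<pi>'_d' by simp
  qed (use that \<pi>'_\<pi> in simp)
  have W'_eq: "W' t = W t" if "t \<in> {0..\<delta>2}" for t
    using value_eq_after_switch[OF \<open>\<delta>2 \<le> B\<close> assms(9,10) same_Qmul that] .
  show ?thesis
    using optimal
  proof (rule eventually_mono)
    fix t assume opt: "t \<in> {0..B} \<longrightarrow> \<pi> (B - t) \<in> Fset Act Q 1 (W t)"
    show "t \<in> {0..<\<delta>2} \<longrightarrow> \<pi>' (B - t) \<in> Fset Act Q 1 (W' t)"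
    proof
      assume t: "t \<in> {0..<\<delta>2}"
      show "\<pi>' (B - t) \<in> Fset Act Q 1 (W' t)"
      proof (cases "t < \<delta>1")
        case True
        then show ?thesis using opt t \<pi>'_\<pi> W'_eq \<open>\<delta>2 \<le> B\<close> by auto
      next
        case False
        with t \<open>t0 \<le> \<delta>1\<close> have "t \<in> {\<delta>1..<\<delta>2}" "t \<in> {t0..\<delta>2}" by auto
        moreover have "d' \<in> Fset Act Q 1 (W t) \<longleftrightarrow> d1 \<in> Fset Act Q 1 (W t)"
          by (rule Fset_iff_if_funpow_eq[OF Fset_decisions[OF d'] Fset_decisions[OF assms(5)]
                powers[OF _ \<open>t \<in> {t0..\<delta>2}\<close>]]) simp
        moreover have "d1 \<in> Fset Act Q 1 (W t)" using \<open>t \<in> {t0..\<delta>2}\<close> by (rule window)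
        moreover have "W' t = W t" using t by (intro W'_eq) simp
        ultimately show ?thesis using \<pi>'_d'[OF \<open>t \<in> {\<delta>1..<\<delta>2}\<close>] by (simp only:)
      qed
    qed
  qed
qed

end

theorem mainTheorem2:
  fixes Act :: "'s::finite \<Rightarrow> 'a set" and Q :: "'s \<Rightarrow> 'a \<Rightarrow> 's \<Rightarrow> real"
    and good :: 's and B tstar :: real
    and \<pi> :: "real \<Rightarrow> 's \<Rightarrow> 'a" and W :: "real \<Rightarrow> 's \<Rightarrow> real"
  assumes "ctmdp Act Q" and "absorbing Act Q good" and "B > 0"
    and "policy Act B \<pi>" and "value_fn Q good B \<pi> W"
    and "AE t in lborel. t \<in> {0..B} \<longrightarrow> \<pi> (B - t) \<in> Fset Act Q 1 (W t)"
    and "0 < tstar" and "tstar \<le> B"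
    and "\<exists>G. (\<forall>\<^sub>F t in at_left tstar. Fset Act Q (CARD('s) - 1 + 2) (W t) = G)
              \<and> Fset Act Q (CARD('s) - 1 + 2) (W tstar) \<noteq> G"
    and "card (Fset Act Q (CARD('s) - 1 + 2) (W tstar)) > 1"
  shows "(\<forall>d1\<in>Fset Act Q (CARD('s) - 1 + 2) (W tstar). \<forall>d2\<in>Fset Act Q (CARD('s) - 1 + 2) (W tstar).
            Delta Act Q (CARD('s) - 1 + 2) B W tstar d1 = Delta Act Q (CARD('s) - 1 + 2) B W tstar d2)
       \<and> (\<forall>d1\<in>Fset Act Q (CARD('s) - 1 + 2) (W tstar). \<forall>\<delta>1 \<delta>2 d d' \<pi>' W'.
            tstar \<le> \<delta>1 \<and> \<delta>1 < \<delta>2 \<and> ereal \<delta>2 < ereal tstar + Delta Act Q (CARD('s) - 1 + 2) B W tstar d1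
            \<and> \<delta>2 \<le> B
            \<and> d \<in> Fset Act Q (CARD('s) - 1 + 1) (W tstar)
            \<and> (\<forall>t\<in>{\<delta>1..<\<delta>2}. \<pi> (B - t) = d)
            \<and> policy Act B \<pi>' \<and> value_fn Q good B \<pi>' W'
            \<and> (\<forall>t\<in>{0..<\<delta>1}. \<pi>' (B - t) = \<pi> (B - t))
            \<and> d' \<in> Fset Act Q (CARD('s) - 1 + 1) (W tstar) - {d}
            \<and> (\<forall>t\<in>{\<delta>1..<\<delta>2}. \<pi>' (B - t) = d')
            \<longrightarrow> (AE t in lborel. t \<in> {0..<\<delta>2} \<longrightarrow> \<pi>' (B - t) \<in> Fset Act Q 1 (W' t)))"
proof -
  interpret bellman_optimal Act Q good B \<pi> W
    using assms(1,3,5,6) by unfold_locales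
  \<comment> \<open>|S| = n + 1, so F_{n+2} is Fset (Suc CARD('s)).\<close>
  have N: "CARD('s) - 1 + 2 = Suc CARD('s)" "CARD('s) - 1 + 1 = CARD('s)"
    using finite_UNIV_card_ge_0[where 'a = 's] by simp_all
  have "0 \<le> tstar" using \<open>0 < tstar\<close> by simp
  show ?thesis
    unfolding N
  proof (intro conjI ballI allI impI)
    fix d1 d2 assume "d1 \<in> Fset Act Q (Suc CARD('s)) (W tstar)" "d2 \<in> Fset Act Q (Suc CARD('s)) (W tstar)"
    then show "Delta Act Q (Suc CARD('s)) B W tstar d1 = Delta Act Q (Suc CARD('s)) B W tstar d2"
      by (rule Delta_eq[OF \<open>0 \<le> tstar\<close>])
  next
    fix d1 \<delta>1 \<delta>2 d d' \<pi>' W'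
    assume "d1 \<in> Fset Act Q (Suc CARD('s)) (W tstar)"
      and "tstar \<le> \<delta>1 \<and> \<delta>1 < \<delta>2 \<and> ereal \<delta>2 < ereal tstar + Delta Act Q (Suc CARD('s)) B W tstar d1
        \<and> \<delta>2 \<le> B \<and> d \<in> Fset Act Q CARD('s) (W tstar) \<and> (\<forall>t\<in>{\<delta>1..<\<delta>2}. \<pi> (B - t) = d)
        \<and> policy Act B \<pi>' \<and> value_fn Q good B \<pi>' W' \<and> (\<forall>t\<in>{0..<\<delta>1}. \<pi>' (B - t) = \<pi> (B - t))
        \<and> d' \<in> Fset Act Q CARD('s) (W tstar) - {d} \<and> (\<forall>t\<in>{\<delta>1..<\<delta>2}. \<pi>' (B - t) = d')"
    then show "AE t in lborel. t \<in> {0..<\<delta>2} \<longrightarrow> \<pi>' (B - t) \<in> Fset Act Q 1 (W' t)"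
      by (intro optimal_after_switch[OF \<open>0 \<le> tstar\<close>, of \<delta>1 \<delta>2 d1 d \<pi>' W' d']) auto
  qed
qed

end
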